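(* Let $0\le\lambda<\gamma\le\delta$. If $F\in\mathcal{R}(\gamma,\delta,\lambda)$, then $\mathrm{Re}\left\{\frac{F(z)}{z}\right\}>\frac12$ for all $z\in\mathcal{U}$.
   Context: Let $\mathcal{U}=\{z\in\mathbb{C}:|z|<1\}$ and let $\mathcal{A}$ be the class of analytic functions $F$ in $\mathcal{U}$ with $F(0)=0$, $F'(0)=1$. For real $0\le\lambda<\gamma\le\delta$, $\mathcal{R}(\gamma,\delta,\lambda)$ is the class of $F\in\mathcal{A}$ such that $\mathrm{Re}\{\gamma F'(z)+\delta zF''(z)+\frac{\delta-\gamma}{2}z^2F'''(z)\}>\lambda$ for all $z\in\mathcal{U}$. Here $F(z)/z$ at $z=0$ means its limiting value $1$. *)

theory Defs
  imports "HOL-Complex_Analysis.Complex_Analysis"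
begin

definition unit_disc :: "complex set" where
  "unit_disc = ball 0 1"

definition class_A :: "(complex \<Rightarrow> complex) set" where
  "class_A = {F. F holomorphic_on unit_disc \<and> F 0 = 0 \<and> deriv F 0 = 1}"

definition class_R :: "real \<Rightarrow> real \<Rightarrow> real \<Rightarrow> (complex \<Rightarrow> complex) set" where
  "class_R gam del lam = {F \<in> class_A. \<forall>z\<in>unit_disc.
      Re (of_real gam * deriv F z + of_real del * z * (deriv ^^ 2) F z
          + of_real ((del - gam) / 2) * z^2 * (deriv ^^ 3) F z) > lam}"

end

theory Submission
  imports Defs
begin

text \<open>
  Put \<open>q = (z F')' = F' + z F''\<close> and \<open>\<nu> = (\<delta> - \<gamma>)/2\<close>. The hypothesis says
  \<open>Re (\<gamma> q + \<nu> z q') > \<lambda> \<ge> 0\<close>. For \<open>\<nu> > 0\<close> this makes \<open>t powr (\<gamma>/\<nu>) * Re q(t z)\<close>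
  strictly increasing on \<open>[0, 1]\<close>, so \<open>Re q > 0\<close> in the disc. Since \<open>q(0) = 1\<close>, Schwarz's lemma
  applied to \<open>(q - 1)/(q + 1)\<close> yields Harnack's bound
  \<open>Re q(w) \<ge> (1 - |w|)/(1 + |w|) \<ge> 1 - 2|w|\<close>. Integrating along rays twice gives
  \<open>Re F'(z) \<ge> 1 - |z|\<close> and then \<open>Re (F(z)/z) \<ge> 1 - |z|/2 > 1/2\<close>.
\<close>

lemma of_real_mult_in_unit_ball:
  assumes "z \<in> ball (0::complex) 1" "0 \<le> t" "t \<le> 1"
  shows "complex_of_real t * z \<in> ball 0 1"
proof -
  have "norm (complex_of_real t * z) = t * norm z"
    using assms by (simp add: norm_mult)
  also have "\<dots> \<le> norm z"
    using assms by (simp add: mult_left_le_one_le)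
  finally show ?thesis
    using assms by simp
qed

lemma has_real_derivative_Re_along_ray:
  assumes "(f has_field_derivative f') (at (complex_of_real t * z))"
  shows "((\<lambda>s. Re (f (complex_of_real s * z))) has_real_derivative Re (f' * z)) (at t)"
proof -
  have "((\<lambda>\<zeta>. \<zeta> * z) has_field_derivative z) (at (complex_of_real t))"
    by (auto intro!: derivative_eq_intros)
  from DERIV_chain2[OF assms this]
  have "((\<lambda>\<zeta>. f (\<zeta> * z)) has_field_derivative f' * z) (at (complex_of_real t))" .
  moreover have "(complex_of_real has_vector_derivative 1) (at t)"
    using has_vector_derivative_real_field[of "\<lambda>x. x" 1 t] by (auto intro!: derivative_eq_intros)
  ultimately have "((\<lambda>s. f (complex_of_real s * z)) has_vector_derivative f' * z) (at t)"
    using field_vector_diff_chain_at by (force simp: o_def)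
  then show ?thesis
    by (rule has_field_derivative_Re)
qed

lemma Re_pos_of_Re_Euler_combination_pos:
  fixes q q' :: "complex \<Rightarrow> complex" and a :: real
  assumes "a > 0"
    and q': "\<And>w. w \<in> ball 0 1 \<Longrightarrow> (q has_field_derivative q' w) (at w)"
    and pos: "\<And>w. w \<in> ball 0 1 \<Longrightarrow> Re (a * q w + w * q' w) > 0"
    and z: "z \<in> ball 0 1"
  shows "Re (q z) > 0"
proof -
  define \<Phi> where "\<Phi> t = t powr a * Re (q (complex_of_real t * z))" for t
  have Re_q: "((\<lambda>t. Re (q (complex_of_real t * z))) has_real_derivative
      Re (q' (complex_of_real t * z) * z)) (at t)" if "0 \<le> t" "t \<le> 1" for t
    using has_real_derivative_Re_along_ray q' of_real_mult_in_unit_ball z that by blast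
  have "\<Phi> 0 < \<Phi> 1"
  proof (rule DERIV_pos_imp_increasing_open[of 0 1 \<Phi>])
    fix t :: real
    assume t: "0 < t" "t < 1"
    define w where "w = complex_of_real t * z"
    have w_in: "w \<in> ball 0 1"
      using of_real_mult_in_unit_ball t z unfolding w_def by simp
    have "(\<Phi> has_real_derivative a * t powr (a - 1) * Re (q w) + Re (q' w * z) * t powr a) (at t)"
      unfolding \<Phi>_def w_def using t by (intro DERIV_mult has_real_derivative_powr Re_q) auto
    moreover have "a * t powr (a - 1) * Re (q w) + Re (q' w * z) * t powr a
        = t powr (a - 1) * Re (a * q w + w * q' w)"
      using t by (simp add: w_def powr_diff algebra_simps)
    ultimately show "\<exists>y. (\<Phi> has_real_derivative y) (at t) \<and> y > 0"
      using pos[OF w_in] t by auto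
  next
    have "continuous_on {0..1} (\<lambda>t. Re (q (complex_of_real t * z)))"
      using Re_q by (intro continuous_at_imp_continuous_on ballI DERIV_isCont) auto
    then show "continuous_on {0..1} \<Phi>"
      unfolding \<Phi>_def using \<open>a > 0\<close> by (intro continuous_on_mult continuous_on_powr') auto
  qed simp
  then show ?thesis
    by (simp add: \<Phi>_def)
qed

lemma Re_pos_of_Re_combination_pos:
  fixes q q' :: "complex \<Rightarrow> complex" and c d :: real
  assumes "c > 0" "d \<ge> 0"
    and q': "\<And>w. w \<in> ball 0 1 \<Longrightarrow> (q has_field_derivative q' w) (at w)"
    and pos: "\<And>w. w \<in> ball 0 1 \<Longrightarrow> Re (complex_of_real c * q w + complex_of_real d * w * q' w) > 0"
    and z: "z \<in> ball 0 1"
  shows "Re (q z) > 0"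
proof (cases "d = 0")
  case True
  then show ?thesis
    using pos[OF z] \<open>c > 0\<close> by (simp add: zero_less_mult_iff)
next
  case False
  then have "d > 0"
    using \<open>d \<ge> 0\<close> by simp
  have "Re (c / d * q w + w * q' w) > 0" if "w \<in> ball 0 1" for w
  proof -
    have "Re (c / d * q w + w * q' w) = Re (complex_of_real c * q w + complex_of_real d * w * q' w) / d"
      using \<open>d > 0\<close> by (simp add: field_simps)
    then show ?thesis
      using pos[OF that] \<open>d > 0\<close> by simp
  qed
  then show ?thesis
    using Re_pos_of_Re_Euler_combination_pos[of "c / d" q q' z] \<open>c > 0\<close> \<open>d > 0\<close> q' z
    by simp
qed

lemma Re_ge_of_Cayley_transform_bound:
  fixes q :: complex and r :: real
  assumes "Re q > 0" "norm (q - 1) \<le> r * norm (q + 1)" "0 \<le> r" "r < 1"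
  shows "Re q \<ge> (1 - r) / (1 + r)"
proof -
  define u v where "u = Re q" and "v = Im q"
  have "(norm (q - 1))\<^sup>2 \<le> (r * norm (q + 1))\<^sup>2"
    using assms by (intro power_mono) auto
  then have "(u - 1)\<^sup>2 + v\<^sup>2 \<le> r\<^sup>2 * ((u + 1)\<^sup>2 + v\<^sup>2)"
    unfolding u_def v_def by (simp add: cmod_def power_mult_distrib)
  moreover have "r\<^sup>2 * v\<^sup>2 \<le> v\<^sup>2"
    using assms by (intro mult_left_le_one_le) (auto simp: power_le_one)
  ultimately have "(u - 1)\<^sup>2 \<le> r\<^sup>2 * (u + 1)\<^sup>2"
    by (simp add: distrib_left)
  then have "(u - 1)\<^sup>2 \<le> (r * (u + 1))\<^sup>2"
    by (simp add: power_mult_distrib)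
  then have "\<bar>u - 1\<bar> \<le> \<bar>r * (u + 1)\<bar>"
    using power2_le_imp_le[of "\<bar>u - 1\<bar>" "\<bar>r * (u + 1)\<bar>"] by simp
  then have "1 - u \<le> r * u + r"
    using assms by (simp add: u_def v_def abs_mult algebra_simps)
  then show ?thesis
    using assms by (simp add: u_def v_def field_simps)
qed

lemma Harnack_inequality_Re:
  fixes q :: "complex \<Rightarrow> complex"
  assumes hol: "q holomorphic_on ball 0 1" and "q 0 = 1"
    and pos: "\<And>w. w \<in> ball 0 1 \<Longrightarrow> Re (q w) > 0"
    and w: "w \<in> ball 0 1"
  shows "Re (q w) \<ge> (1 - norm w) / (1 + norm w)"
proof -
  define \<omega> where "\<omega> x = (q x - 1) / (q x + 1)" for x
  have nonzero: "q x + 1 \<noteq> 0" if "x \<in> ball 0 1" for x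
  proof
    assume "q x + 1 = 0"
    then have "Re (q x) = -1"
      by (simp add: complex_eq_iff)
    with pos[OF that] show False
      by simp
  qed
  have "norm (\<omega> x) < 1" if "norm x < 1" for x
  proof -
    have "(norm (q x - 1))\<^sup>2 = (Re (q x) - 1)\<^sup>2 + (Im (q x))\<^sup>2"
      and "(norm (q x + 1))\<^sup>2 = (Re (q x) + 1)\<^sup>2 + (Im (q x))\<^sup>2"
      by (simp_all add: cmod_power2)
    then have "(norm (q x - 1))\<^sup>2 < (norm (q x + 1))\<^sup>2"
      using pos[of x] that by (simp add: power2_eq_square algebra_simps)
    then have "norm (q x - 1) < norm (q x + 1)"
      using power2_less_imp_less norm_ge_zero by blast
    then show ?thesis
      using nonzero[of x] that by (simp add: \<omega>_def norm_divide divide_less_eq_1)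
  qed
  moreover have "\<omega> holomorphic_on ball 0 1"
    unfolding \<omega>_def using nonzero by (intro holomorphic_intros hol) auto
  moreover have "\<omega> 0 = 0"
    by (simp add: \<omega>_def \<open>q 0 = 1\<close>)
  ultimately have "norm (\<omega> w) \<le> norm w"
    using Schwarz_Lemma(1) w by simp
  then have "norm (q w - 1) \<le> norm w * norm (q w + 1)"
    using nonzero[OF w] by (simp add: \<omega>_def norm_divide pos_divide_le_eq)
  then show ?thesis
    using Re_ge_of_Cayley_transform_bound pos w by simp
qed

lemma Re_divide_ge_of_Re_deriv_ge:
  fixes h h' :: "complex \<Rightarrow> complex" and c :: real
  assumes h': "\<And>w. w \<in> ball 0 1 \<Longrightarrow> (h has_field_derivative h' w) (at w)"
    and "h 0 = 0"
    and bound: "\<And>w. w \<in> ball 0 1 \<Longrightarrow> Re (h' w) \<ge> 1 - c * norm w"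
    and z: "z \<in> ball 0 1" "z \<noteq> 0"
  shows "Re (h z / z) \<ge> 1 - c * norm z / 2"
proof -
  define \<psi> where "\<psi> t = Re (h (complex_of_real t * z) / z) - (t - c * norm z * t\<^sup>2 / 2)" for t
  have "\<psi> 0 \<le> \<psi> 1"
  proof (rule DERIV_nonneg_imp_nondecreasing[of 0 1 \<psi>])
    fix t :: real
    assume t: "0 \<le> t" "t \<le> 1"
    define w where "w = complex_of_real t * z"
    have w_in: "w \<in> ball 0 1"
      using of_real_mult_in_unit_ball t z unfolding w_def by blast
    have "((\<lambda>\<zeta>. h \<zeta> / z) has_field_derivative h' w / z) (at w)"
      using h'[OF w_in] by (rule DERIV_cdivide)
    from has_real_derivative_Re_along_ray[OF this[unfolded w_def]]
    have "((\<lambda>s. Re (h (complex_of_real s * z) / z)) has_real_derivative Re (h' w)) (at t)"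
      using \<open>z \<noteq> 0\<close> by (simp add: w_def)
    then have "(\<psi> has_real_derivative Re (h' w) - (1 - c * norm z * t)) (at t)"
      unfolding \<psi>_def by (rule DERIV_diff) (auto intro!: derivative_eq_intros)
    moreover have "norm w = t * norm z"
      using t by (simp add: w_def norm_mult)
    ultimately show "\<exists>y. (\<psi> has_real_derivative y) (at t) \<and> y \<ge> 0"
      using bound[OF w_in] by (auto simp: algebra_simps)
  qed simp
  then show ?thesis
    by (simp add: \<psi>_def \<open>h 0 = 0\<close>)
qed

lemma has_field_derivative_higher_deriv:
  assumes "f holomorphic_on S" "open S" "w \<in> S"
  shows "((deriv ^^ n) f has_field_derivative (deriv ^^ Suc n) f w) (at w)"
  using holomorphic_derivI[OF holomorphic_higher_deriv[OF assms(1,2)] assms(2,3)] by simp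

lemma Re_deriv_ge_of_Re_deriv_z_deriv_pos:
  fixes F :: "complex \<Rightarrow> complex"
  assumes hol: "F holomorphic_on ball 0 1" and "deriv F 0 = 1"
    and pos: "\<And>w. w \<in> ball 0 1 \<Longrightarrow> Re (deriv F w + w * (deriv ^^ 2) F w) > 0"
    and z: "z \<in> ball 0 1"
  shows "Re (deriv F z) \<ge> 1 - norm z"
proof -
  define q where "q w = deriv F w + w * (deriv ^^ 2) F w" for w
  have "q holomorphic_on ball 0 1"
    unfolding q_def using hol by (intro holomorphic_intros) auto
  moreover have "q 0 = 1"
    by (simp add: q_def \<open>deriv F 0 = 1\<close>)
  ultimately have q_ge: "Re (q w) \<ge> 1 - 2 * norm w" if "w \<in> ball 0 1" for w
  proof -
    have "Re (q w) \<ge> (1 - norm w) / (1 + norm w)"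
      using Harnack_inequality_Re \<open>q holomorphic_on ball 0 1\<close> \<open>q 0 = 1\<close> pos that
      unfolding q_def by blast
    moreover have "(1 - 2 * norm w) * (1 + norm w) \<le> 1 - norm w"
      by (simp add: algebra_simps)
    then have "(1 - norm w) / (1 + norm w) \<ge> 1 - 2 * norm w"
      by (simp add: pos_le_divide_eq add_pos_nonneg)
    ultimately show ?thesis
      by linarith
  qed
  have z_deriv: "((\<lambda>w. w * deriv F w) has_field_derivative q w) (at w)" if "w \<in> ball 0 1" for w
    using has_field_derivative_higher_deriv[OF hol open_ball that, of 1]
    unfolding q_def by (auto simp: numeral_2_eq_2 intro!: derivative_eq_intros)
  show ?thesis
  proof (cases "z = 0")
    case True
    then show ?thesis
      using \<open>deriv F 0 = 1\<close> by simp
  next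
    case False
    then show ?thesis
      using Re_divide_ge_of_Re_deriv_ge[OF z_deriv _ q_ge z False] by simp
  qed
qed

lemma class_R_Re_deriv_z_deriv_pos:
  assumes "0 \<le> lam" "lam < gam" "gam \<le> del" "F \<in> class_R gam del lam"
    and z: "z \<in> ball 0 1"
  shows "Re (deriv F z + z * (deriv ^^ 2) F z) > 0"
proof -
  define q q' where "q w = deriv F w + w * (deriv ^^ 2) F w"
    and "q' w = 2 * (deriv ^^ 2) F w + w * (deriv ^^ 3) F w" for w
  have hol: "F holomorphic_on ball 0 1"
    using assms(4) by (simp add: class_R_def class_A_def unit_disc_def)
  have q_deriv: "(q has_field_derivative q' w) (at w)" if "w \<in> ball 0 1" for w
    using has_field_derivative_higher_deriv[OF hol open_ball that, of 1]
      has_field_derivative_higher_deriv[OF hol open_ball that, of 2]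
    unfolding q_def q'_def by (auto simp: numeral_2_eq_2 numeral_3_eq_3 intro!: derivative_eq_intros)
  have combination_pos: "Re (of_real gam * q w + of_real ((del - gam) / 2) * w * q' w) > 0"
    if "w \<in> ball 0 1" for w
  proof -
    have "of_real gam * q w + of_real ((del - gam) / 2) * w * q' w
        = of_real gam * deriv F w + of_real del * w * (deriv ^^ 2) F w
          + of_real ((del - gam) / 2) * w\<^sup>2 * (deriv ^^ 3) F w"
      by (simp add: q_def q'_def field_simps power2_eq_square)
    moreover have "Re (of_real gam * deriv F w + of_real del * w * (deriv ^^ 2) F w
          + of_real ((del - gam) / 2) * w\<^sup>2 * (deriv ^^ 3) F w) > lam"
      using assms(4) that by (simp add: class_R_def unit_disc_def)
    ultimately show ?thesis
      using \<open>0 \<le> lam\<close> by simp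
  qed
  have "Re (q z) > 0"
    using Re_pos_of_Re_combination_pos[OF _ _ q_deriv combination_pos z] assms(1-3) by simp
  then show ?thesis
    by (simp add: q_def)
qed

theorem lemma14:
  fixes gam del lam :: real and F :: "complex \<Rightarrow> complex"
  assumes "0 \<le> lam" and "lam < gam" and "gam \<le> del"
    and "F \<in> class_R gam del lam"
  shows "\<forall>z\<in>unit_disc. Re (if z = 0 then 1 else F z / z) > 1/2"
proof
  fix z
  assume "z \<in> unit_disc"
  then have z: "z \<in> ball 0 1"
    by (simp add: unit_disc_def)
  have F: "F holomorphic_on ball 0 1" "F 0 = 0" "deriv F 0 = 1"
    using assms(4) by (auto simp: class_R_def class_A_def unit_disc_def)
  have "Re (deriv F w) \<ge> 1 - 1 * norm w" if "w \<in> ball 0 1" for w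
    using Re_deriv_ge_of_Re_deriv_z_deriv_pos[OF F(1,3) class_R_Re_deriv_z_deriv_pos[OF assms] that]
    by simp
  then have "Re (F z / z) \<ge> 1 - 1 * norm z / 2" if "z \<noteq> 0"
    using Re_divide_ge_of_Re_deriv_ge[OF holomorphic_derivI[OF F(1) open_ball] F(2) _ z that]
    by blast
  then show "Re (if z = 0 then 1 else F z / z) > 1/2"
    using z by auto
qed

end
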